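(* Let $n$ be odd, and let $C$ and $D$ be concentric ellipses in $\mathbb R^2$ with $D$ inside $C$. Let $P=(p_1,\dots,p_n)$ be a Poncelet $n$-gon for the pair $(C,D)$, and let $Q$ be the polygon whose $i$-th vertex is the intersection of the tangent lines to $C$ at $p_i$ and $p_{i+1}$. Then the ratio $\operatorname{Area}(Q)/\operatorname{Area}(P)$ is the same for all polygons $P$ in the Poncelet family containing $P$.
   Context: A Poncelet $n$-gon for the pair $(C,D)$ is a closed polygon $(p_1,\dots,p_n)$ (indices mod $n$) with all vertices on $C$ and all sides $p_ip_{i+1}$ tangent to $D$. By the Poncelet porism, if one such closed $n$-gon exists, then starting from any point of $C$ and successively drawing tangent lines to $D$ (always continuing in the same rotational sense) produces a closed $n$-gon; the Poncelet family is this continuous 1-parameter family of polygons. For self-intersecting polygons, area means the signed area given by the shoelace formula. *)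

theory Defs
  imports "HOL-Analysis.Analysis"
begin

type_synonym pt = "real \<times> real"

definition det2 :: "pt \<Rightarrow> pt \<Rightarrow> real" where
  "det2 u v = fst u * snd v - snd u * fst v"

text \<open>An ellipse with centre c and positive definite quadratic form
  Q(x,y) = a x^2 + 2 b x y + d y^2 is the curve Q(z - c) = 1.
  Every ellipse in the plane is of this form.\<close>
record ellipse =
  ctr :: pt
  ca :: real
  cb :: real
  cd :: real

definition is_ellipse :: "ellipse \<Rightarrow> bool" where
  "is_ellipse E \<longleftrightarrow> ca E > 0 \<and> ca E * cd E - (cb E)^2 > 0"

definition bform :: "ellipse \<Rightarrow> pt \<Rightarrow> pt \<Rightarrow> real" where
  "bform E u v = ca E * fst u * fst v + cb E * (fst u * snd v + snd u * fst v)
                 + cd E * snd u * snd v"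

definition qform :: "ellipse \<Rightarrow> pt \<Rightarrow> real" where
  "qform E z = bform E (z - ctr E) (z - ctr E)"

definition curve :: "ellipse \<Rightarrow> pt set" where
  "curve E = {z. qform E z = 1}"

definition ellipse_inside :: "ellipse \<Rightarrow> ellipse \<Rightarrow> bool" where
  "ellipse_inside D C \<longleftrightarrow> (\<forall>z \<in> curve D. qform C z < 1)"

definition concentric :: "ellipse \<Rightarrow> ellipse \<Rightarrow> bool" where
  "concentric C D \<longleftrightarrow> ctr C = ctr D"

definition tangent_line :: "ellipse \<Rightarrow> pt \<Rightarrow> pt set" where
  "tangent_line E p = {z. bform E (p - ctr E) (z - ctr E) = 1}"

text \<open>The directed segment from p to q lies on a line tangent to D, with D
  on the side prescribed by the rotational sense s (s = 1: D on the left,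
  s = -1: D on the right).  A line meeting the ellipse D and having all of
  D on one side is exactly a tangent line of D.\<close>
definition tangent_side :: "ellipse \<Rightarrow> real \<Rightarrow> pt \<Rightarrow> pt \<Rightarrow> bool" where
  "tangent_side D s p q \<longleftrightarrow> p \<noteq> q \<and>
     (\<exists>z \<in> curve D. det2 (q - p) (z - p) = 0) \<and>
     (\<forall>z \<in> curve D. s * det2 (q - p) (z - p) \<ge> 0)"

text \<open>For fixed (C,D,n,s) these polygons form
  exactly the Poncelet family: each vertex determines the next one uniquely.\<close>
definition poncelet_ngon :: "ellipse \<Rightarrow> ellipse \<Rightarrow> nat \<Rightarrow> real \<Rightarrow> (nat \<Rightarrow> pt) \<Rightarrow> bool" where
  "poncelet_ngon C D n s p \<longleftrightarrow> s \<in> {1, -1} \<and>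
     (\<forall>i < n. p i \<in> curve C \<and> tangent_side D s (p i) (p (Suc i mod n)))"

definition poly_area :: "nat \<Rightarrow> (nat \<Rightarrow> pt) \<Rightarrow> real" where
  "poly_area n p = (\<Sum>i<n. det2 (p i) (p (Suc i mod n))) / 2"

definition tangential_polygon :: "ellipse \<Rightarrow> nat \<Rightarrow> (nat \<Rightarrow> pt) \<Rightarrow> nat \<Rightarrow> pt" where
  "tangential_polygon C n p i =
     (THE q. q \<in> tangent_line C (p i) \<and> q \<in> tangent_line C (p (Suc i mod n)))"

end

theory Submission
  imports Defs
begin

text \<open>Centre both ellipses at their common centre and view them as positive definite forms
  \<open>C\<close> and \<open>D\<close>. The vertex of \<open>Q\<close> between \<open>p i\<close> and \<open>p (i + 1)\<close> is the pole of that side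
  with respect to \<open>C\<close>; if the side touches \<open>D\<close> at \<open>t i\<close>, this pole is \<open>C\<inverse> D (t i)\<close>.
  Let \<open>K\<close> be the geometric mean of \<open>C\<close> and \<open>D\<close>, i.e. \<open>K C\<inverse> K = D\<close>. Then
  \<open>r i = C\<inverse> K (t i)\<close> lies on \<open>C\<close> and \<open>Q i = C\<inverse> K (r i)\<close>, so
  \<open>Area Q = (det K / det C) Area r\<close>. Moreover the chords from \<open>p i\<close> to \<open>r i\<close> and from
  \<open>r i\<close> to \<open>p (i + 1)\<close> are polar with respect to \<open>K\<close>, so \<open>p 0, r 0, p 1, r 1, \<dots>\<close> is a
  closed Poncelet \<open>2 n\<close>-gon for \<open>C\<close> and a conic inside it.
  After normalising \<open>C\<close> to the unit circle, the Poncelet map is a monotone circle map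
  commuting with \<open>x \<mapsto> -x\<close>; since its \<open>2 n\<close>-th iterate fixes a point, its \<open>n\<close>-th iterate
  is \<open>\<plusminus>\<close> the identity along the polygon. For odd \<open>n\<close> it exchanges the vertices \<open>p i\<close> with
  the vertices \<open>r j\<close>, hence \<open>Area r = Area P\<close>, and the ratio is the constant \<open>det K / det C\<close>.\<close>

section \<open>Bilinear forms of ellipses\<close>

lemma bform_commute: "bform E u v = bform E v u"
  by (simp add: bform_def algebra_simps)

lemma bform_add_scaleR_left:
  "bform E (l *\<^sub>R x + m *\<^sub>R y) w = l * bform E x w + m * bform E y w"
  by (simp add: bform_def algebra_simps)

lemma bform_add_scaleR_right:
  "bform E w (l *\<^sub>R x + m *\<^sub>R y) = l * bform E w x + m * bform E w y"
  by (simp add: bform_def algebra_simps)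

lemma bform_scaleR_left: "bform E (c *\<^sub>R x) y = c * bform E x y"
  by (simp add: bform_def algebra_simps)

lemma bform_scaleR_right: "bform E x (c *\<^sub>R y) = c * bform E x y"
  by (simp add: bform_def algebra_simps)

lemma bform_diff_right: "bform E x (y - z) = bform E x y - bform E x z"
  by (simp add: bform_def algebra_simps)

lemma bform_uminus [simp]: "bform E (- x) (- y) = bform E x y"
  by (simp add: bform_def)

lemma det2_scaleR_right: "det2 u (c *\<^sub>R v) = c * det2 u v"
  by (simp add: det2_def algebra_simps)

lemma det2_eq_0_imp_scaleR:
  assumes "det2 d z = 0" "d \<noteq> 0"
  obtains c where "z = c *\<^sub>R d"
proof -
  have e: "fst d * snd z = snd d * fst z" using assms(1) by (simp add: det2_def)
  show ?thesis
  proof (cases "fst d = 0")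
    case True
    then have "snd d \<noteq> 0" using assms(2) by (simp add: prod_eq_iff)
    then have "z = (snd z / snd d) *\<^sub>R d" using e True by (simp add: prod_eq_iff)
    then show ?thesis by (rule that)
  next
    case False
    then have "z = (fst z / fst d) *\<^sub>R d" using e by (simp add: prod_eq_iff field_simps)
    then show ?thesis by (rule that)
  qed
qed

lemma orthogonal_to_basis_eq_0:
  assumes "det2 u u' \<noteq> 0"
    and u: "fst u * fst m + snd u * snd m = 0" and u': "fst u' * fst m + snd u' * snd m = 0"
  shows "m = 0"
proof -
  have "det2 u u' * fst m = snd u' * (fst u * fst m + snd u * snd m)
      - snd u * (fst u' * fst m + snd u' * snd m)"
    "det2 u u' * snd m = fst u * (fst u' * fst m + snd u' * snd m)
      - fst u' * (fst u * fst m + snd u * snd m)"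
    by (simp_all add: det2_def algebra_simps)
  then have "det2 u u' * fst m = 0" "det2 u u' * snd m = 0" by (simp_all only: u u')
  then show ?thesis using assms(1) by (simp add: prod_eq_iff)
qed

definition detE :: "ellipse \<Rightarrow> real" where
  "detE E = ca E * cd E - cb E ^ 2"

lemma detE_pos: "is_ellipse E \<Longrightarrow> 0 < detE E"
  by (simp add: is_ellipse_def detE_def)

lemma bform_pos:
  assumes "is_ellipse E" "x \<noteq> 0"
  shows "0 < bform E x x"
proof -
  have a: "0 < ca E" and d: "0 < detE E" using assms(1) by (auto simp: is_ellipse_def detE_def)
  have sq: "ca E * bform E x x = (ca E * fst x + cb E * snd x)\<^sup>2 + detE E * (snd x)\<^sup>2"
    by (simp add: bform_def detE_def power2_eq_square algebra_simps)
  have "0 < (ca E * fst x + cb E * snd x)\<^sup>2 + detE E * (snd x)\<^sup>2"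
  proof (cases "snd x = 0")
    case True
    then have "fst x \<noteq> 0" using assms(2) by (simp add: prod_eq_iff)
    then show ?thesis using True a by simp
  next
    case False
    then show ?thesis using d by (simp add: add_nonneg_pos)
  qed
  then have "0 < ca E * bform E x x" using sq by simp
  then show ?thesis using a by (simp add: zero_less_mult_iff)
qed

lemma bform_eq_1_imp_nonzero: "bform E x x = 1 \<Longrightarrow> x \<noteq> 0"
  by (auto simp: bform_def)

lemma is_ellipseI_pos_def:
  assumes "\<And>y. y \<noteq> 0 \<Longrightarrow> 0 < bform E y y"
  shows "is_ellipse E"
proof -
  have "0 < bform E (1, 0) (1, 0)" by (rule assms) (simp add: zero_prod_def)
  then have a: "0 < ca E" by (simp add: bform_def)
  have "(- cb E, ca E) \<noteq> 0" using a by (simp add: prod_eq_iff)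
  then have "0 < bform E (- cb E, ca E) (- cb E, ca E)" by (rule assms)
  also have "bform E (- cb E, ca E) (- cb E, ca E) = ca E * detE E"
    by (simp add: bform_def detE_def power2_eq_square algebra_simps)
  finally show ?thesis using a by (simp add: is_ellipse_def detE_def zero_less_mult_iff)
qed

lemma bform_cauchy_schwarz:
  "bform E u u * bform E v v - (bform E u v)\<^sup>2 = detE E * (det2 u v)\<^sup>2"
  by (simp add: bform_def detE_def det2_def power2_eq_square algebra_simps)

definition form_mat :: "ellipse \<Rightarrow> pt \<Rightarrow> pt" where
  "form_mat E x = (ca E * fst x + cb E * snd x, cb E * fst x + cd E * snd x)"

definition form_adj :: "ellipse \<Rightarrow> pt \<Rightarrow> pt" where
  "form_adj E x = (cd E * fst x - cb E * snd x, ca E * snd x - cb E * fst x)"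

definition form_mat_inv :: "ellipse \<Rightarrow> pt \<Rightarrow> pt" where
  "form_mat_inv E x = form_adj E x /\<^sub>R detE E"

lemma bform_form_mat: "bform E x y = fst x * fst (form_mat E y) + snd x * snd (form_mat E y)"
  by (simp add: bform_def form_mat_def algebra_simps)

lemma form_mat_add: "form_mat E (x + y) = form_mat E x + form_mat E y"
  by (simp add: form_mat_def algebra_simps)

lemma form_mat_scaleR: "form_mat E (c *\<^sub>R x) = c *\<^sub>R form_mat E x"
  by (simp add: form_mat_def algebra_simps)

lemma form_mat_inv_add: "form_mat_inv E (x + y) = form_mat_inv E x + form_mat_inv E y"
proof -
  have "form_adj E (x + y) = form_adj E x + form_adj E y"
    by (simp add: form_adj_def algebra_simps)
  then show ?thesis by (simp add: form_mat_inv_def scaleR_add_right)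
qed

lemma form_mat_inv_scaleR: "form_mat_inv E (c *\<^sub>R x) = c *\<^sub>R form_mat_inv E x"
  by (simp add: form_mat_inv_def form_adj_def algebra_simps)

lemma form_mat_adj: "form_mat E (form_adj E x) = detE E *\<^sub>R x"
  by (simp add: form_mat_def form_adj_def detE_def prod_eq_iff power2_eq_square algebra_simps)

lemma form_adj_mat: "form_adj E (form_mat E x) = detE E *\<^sub>R x"
  by (simp add: form_mat_def form_adj_def detE_def prod_eq_iff power2_eq_square algebra_simps)

lemma form_mat_inv_cancel: "detE E \<noteq> 0 \<Longrightarrow> form_mat_inv E (form_mat E x) = x"
  by (simp add: form_mat_inv_def form_adj_mat)

lemma form_mat_cancel: "detE E \<noteq> 0 \<Longrightarrow> form_mat E (form_mat_inv E x) = x"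
  by (simp add: form_mat_inv_def form_mat_scaleR form_mat_adj)

lemma bform_form_mat_inv:
  assumes "detE C \<noteq> 0"
  shows "bform C x (form_mat_inv C (form_mat E y)) = bform E x y"
proof -
  have "bform C x (form_adj C (form_mat E y)) = detE C * bform E x y"
    by (simp add: bform_def form_adj_def form_mat_def detE_def power2_eq_square algebra_simps)
  then show ?thesis using assms by (simp add: form_mat_inv_def bform_scaleR_right)
qed

lemma bform_eq_if_form_mat_eq: "form_mat E y = form_mat F z \<Longrightarrow> bform E x y = bform F x z"
  by (simp add: bform_form_mat)

lemma det2_form_mat: "det2 (form_mat E a) (form_mat E b) = detE E * det2 a b"
  by (simp add: form_mat_def det2_def detE_def power2_eq_square algebra_simps)

lemma det2_form_mat_inv: "det2 (form_mat_inv E a) (form_mat_inv E b) = det2 a b / detE E"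
proof (cases "detE E = 0")
  case False
  then show ?thesis using det2_form_mat[of E "form_mat_inv E a" "form_mat_inv E b"]
    by (simp add: form_mat_cancel field_simps)
qed (simp add: form_mat_inv_def det2_def)

definition pullback_form :: "ellipse \<Rightarrow> (pt \<Rightarrow> pt) \<Rightarrow> ellipse" where
  "pullback_form K f = \<lparr>ctr = 0, ca = bform K (f (1, 0)) (f (1, 0)),
     cb = bform K (f (1, 0)) (f (0, 1)), cd = bform K (f (0, 1)) (f (0, 1))\<rparr>"

lemma bform_pullback_form:
  assumes "linear f"
  shows "bform (pullback_form K f) a b = bform K (f a) (f b)"
proof -
  define e1 e2 where "e1 = f (1, 0)" and "e2 = f (0, 1)"
  have f: "f x = fst x *\<^sub>R e1 + snd x *\<^sub>R e2" for x
  proof -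
    have "f x = f (fst x *\<^sub>R (1, 0) + snd x *\<^sub>R (0, 1))" by simp
    then show ?thesis using assms by (simp only: e1_def e2_def linear_add linear_scale)
  qed
  have "bform K (f a) (f b) = fst a * fst b * bform K e1 e1
      + (fst a * snd b + snd a * fst b) * bform K e1 e2 + snd a * snd b * bform K e2 e2"
    unfolding f[of a] f[of b] bform_add_scaleR_left bform_add_scaleR_right
    by (simp add: bform_commute[of K e2 e1] algebra_simps)
  then show ?thesis by (simp add: pullback_form_def bform_def e1_def e2_def algebra_simps)
qed

section \<open>Poncelet chains on the unit circle\<close>

definition unit_vec :: "real \<Rightarrow> pt" where
  "unit_vec t = (cos t, sin t)"

lemma norm_unit_vec [simp]: "norm (unit_vec t) = 1"
  by (simp add: unit_vec_def norm_Pair)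

lemma det2_unit_vec: "det2 (unit_vec a) (unit_vec b) = sin (b - a)"
  by (simp add: det2_def unit_vec_def sin_diff algebra_simps)

lemma unit_vec_add_pi_int:
  "unit_vec (t + of_int k * pi) = (if even k then unit_vec t else - unit_vec t)"
proof -
  have "cos (of_int k * pi) = (if even k then 1 else -1)" "sin (of_int k * pi) = 0"
    using cos_npi_int[of k] sin_npi_int[of k] by (simp_all add: mult.commute)
  then show ?thesis by (simp add: unit_vec_def cos_add sin_add)
qed

lemma norm_eq_1_iff: "norm (y :: pt) = 1 \<longleftrightarrow> fst y ^ 2 + snd y ^ 2 = 1"
  by (simp add: norm_prod_def)

lemma unit_vec_surj:
  assumes "norm y = 1"
  obtains t where "unit_vec t = y"
proof -
  have "fst y ^ 2 + snd y ^ 2 = 1"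
    using assms by (simp add: norm_eq_1_iff)
  then obtain t where "fst y = cos t" "snd y = sin t" using sincos_total_2pi by metis
  then show ?thesis using that by (simp add: unit_vec_def prod_eq_iff)
qed

lemma unit_vec_between:
  assumes "a < c" "c < b" "b < a + pi"
  obtains l m where "0 < l" "0 < m" "1 \<le> l + m"
    "unit_vec c = l *\<^sub>R unit_vec a + m *\<^sub>R unit_vec b"
proof -
  have s: "0 < sin (b - a)" using assms by (intro sin_gt_zero) auto
  define l where "l = sin (b - c) / sin (b - a)"
  define m where "m = sin (c - a) / sin (b - a)"
  have "0 < l" unfolding l_def using assms s by (intro divide_pos_pos sin_gt_zero) auto
  moreover have "0 < m" unfolding m_def using assms s by (intro divide_pos_pos sin_gt_zero) auto
  moreover have comb: "unit_vec c = l *\<^sub>R unit_vec a + m *\<^sub>R unit_vec b"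
  proof -
    have "sin (b - c) * cos a + sin (c - a) * cos b = sin (b - a) * cos c"
      "sin (b - c) * sin a + sin (c - a) * sin b = sin (b - a) * sin c"
      by (simp_all add: sin_diff algebra_simps)
    then show ?thesis using s by (simp add: unit_vec_def l_def m_def field_simps)
  qed
  moreover have "1 \<le> l + m"
  proof -
    have "1 = norm (l *\<^sub>R unit_vec a + m *\<^sub>R unit_vec b)" by (simp flip: comb)
    also have "\<dots> \<le> \<bar>l\<bar> + \<bar>m\<bar>" by (rule norm_triangle_le) simp
    finally show ?thesis using \<open>0 < l\<close> \<open>0 < m\<close> by simp
  qed
  ultimately show ?thesis using that by blast
qed

lemma bform_unit_vec_between:
  assumes "a < c" "c < b" "b < a + pi"
    and "1 \<le> bform E w (unit_vec a)" "1 \<le> bform E w (unit_vec b)"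
    and "1 < bform E w (unit_vec a) \<or> 1 < bform E w (unit_vec b)"
  shows "1 < bform E w (unit_vec c)"
proof -
  obtain l m where lm: "0 < l" "0 < m" "1 \<le> l + m"
    and c: "unit_vec c = l *\<^sub>R unit_vec a + m *\<^sub>R unit_vec b"
    using unit_vec_between[OF assms(1-3)] by blast
  have "bform E w (unit_vec c) = l * bform E w (unit_vec a) + m * bform E w (unit_vec b)"
    unfolding c by (rule bform_add_scaleR_right)
  moreover have "l \<le> l * bform E w (unit_vec a)" "m \<le> m * bform E w (unit_vec b)"
    using lm assms(4,5) by simp_all
  moreover have "l < l * bform E w (unit_vec a) \<or> m < m * bform E w (unit_vec b)"
    using lm assms(6) by auto
  ultimately show ?thesis using lm(3) by linarith
qed

definition inside_unit_circle :: "ellipse \<Rightarrow> bool" where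
  "inside_unit_circle E \<longleftrightarrow> (\<forall>x. norm x = 1 \<longrightarrow> 1 < bform E x x)"

lemma inside_unit_circle_unit_vec:
  "inside_unit_circle E \<Longrightarrow> 1 < bform E (unit_vec t) (unit_vec t)"
  unfolding inside_unit_circle_def by (metis norm_unit_vec)

text \<open>The polar correspondence of a conic inside the circle is monotone on arcs shorter
  than \<open>pi\<close>.\<close>
lemma chord_angle_mono:
  assumes E: "inside_unit_circle E"
    and "a < b" "b < a + pi" "a < a'" "a' < a + pi" "b < b'" "b' < b + pi"
    and "bform E (unit_vec a) (unit_vec a') = 1" and b': "bform E (unit_vec b) (unit_vec b') = 1"
  shows "a' < b'"
proof (rule ccontr)
  assume "\<not> a' < b'"
  note diag = inside_unit_circle_unit_vec[OF E]
  have a'b: "1 < bform E (unit_vec a') (unit_vec b)"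
    using assms \<open>\<not> a' < b'\<close> diag less_imp_le[OF diag]
    by (intro bform_unit_vec_between) (auto simp: bform_commute[of E "unit_vec a'"])
  show False
  proof (cases "b' = a'")
    case True
    then show ?thesis using a'b b' by (simp add: bform_commute)
  next
    case False
    then have "1 < bform E (unit_vec b) (unit_vec b')"
      using assms \<open>\<not> a' < b'\<close> a'b diag less_imp_le[OF diag]
      by (intro bform_unit_vec_between[of b b' a']) (auto simp: bform_commute[of E "unit_vec a'"])
    then show False using b' by simp
  qed
qed

lemma chord_angle_unique:
  assumes E: "inside_unit_circle E"
    and "a < a1" "a1 < a + pi" "a < a2" "a2 < a + pi"
    and "bform E (unit_vec a) (unit_vec a1) = 1" "bform E (unit_vec a) (unit_vec a2) = 1"
  shows "a1 = a2"
proof (rule ccontr)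
  note diag = inside_unit_circle_unit_vec[OF E]
  assume "a1 \<noteq> a2"
  then consider "a1 < a2" | "a2 < a1" by linarith
  then show False
  proof cases
    case 1
    then have "1 < bform E (unit_vec a) (unit_vec a1)"
      using assms diag less_imp_le[OF diag] by (intro bform_unit_vec_between) auto
    then show False using assms by simp
  next
    case 2
    then have "1 < bform E (unit_vec a) (unit_vec a2)"
      using assms diag less_imp_le[OF diag] by (intro bform_unit_vec_between) auto
    then show False using assms by simp
  qed
qed

lemma unit_vec_lift_ccw:
  assumes "norm y = 1" "0 < det2 (unit_vec a) y"
  obtains b where "a < b" "b < a + pi" "unit_vec b = y"
proof -
  obtain t where t: "unit_vec t = y" using unit_vec_surj[OF assms(1)] .
  define k where "k = \<lceil>(a - t) / (2 * pi)\<rceil>"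
  define b where "b = t + of_int (2 * k) * pi"
  have "(a - t) / (2 * pi) \<le> of_int k" "of_int k < (a - t) / (2 * pi) + 1"
    unfolding k_def by linarith+
  then have "a \<le> b" "b < a + 2 * pi"
    unfolding b_def by (simp_all add: field_simps)
  have "unit_vec b = y"
    using t unit_vec_add_pi_int[of t "2 * k"] by (simp add: b_def)
  then have sin_pos: "0 < sin (b - a)" using assms(2) det2_unit_vec by metis
  then have "b \<noteq> a" by auto
  moreover have "b < a + pi"
  proof (rule ccontr)
    assume "\<not> b < a + pi"
    then have "sin (b - a) \<le> 0" using \<open>b < a + 2 * pi\<close> by (intro sin_le_zero) auto
    then show False using sin_pos by simp
  qed
  ultimately show ?thesis using that \<open>a \<le> b\<close> \<open>unit_vec b = y\<close> by force
qed

definition chord_lift :: "ellipse \<Rightarrow> (nat \<Rightarrow> real) \<Rightarrow> bool" where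
  "chord_lift E \<phi> \<longleftrightarrow> (\<forall>j. \<phi> j < \<phi> (Suc j) \<and> \<phi> (Suc j) < \<phi> j + pi
     \<and> bform E (unit_vec (\<phi> j)) (unit_vec (\<phi> (Suc j))) = 1)"

lemma chord_lift_add_pi_int:
  "chord_lift E \<phi> \<Longrightarrow> chord_lift E (\<lambda>j. \<phi> j + of_int k * pi)"
  by (simp add: chord_lift_def unit_vec_add_pi_int)

lemma chord_lift_shift:
  "chord_lift E \<phi> \<Longrightarrow> chord_lift E (\<lambda>j. \<phi> (j + n))"
  by (simp add: chord_lift_def)

lemma chord_lift_interlace:
  assumes E: "inside_unit_circle E" and \<phi>: "chord_lift E \<phi>" and \<psi>: "chord_lift E \<psi>"
    and "\<phi> 0 < \<psi> 0" "\<psi> 0 < \<phi> 0 + pi"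
  shows "\<phi> j < \<psi> j \<and> \<psi> j < \<phi> j + pi"
proof (induction j)
  case 0
  show ?case using assms by simp
next
  case (Suc j)
  have \<phi>': "chord_lift E (\<lambda>j. \<phi> j + of_int 1 * pi)" by (rule chord_lift_add_pi_int[OF \<phi>])
  have "\<phi> (Suc j) < \<psi> (Suc j)"
    using chord_angle_mono[OF E, of "\<phi> j" "\<psi> j"] Suc \<phi> \<psi> by (simp add: chord_lift_def)
  moreover have "\<psi> (Suc j) < \<phi> (Suc j) + pi"
    using chord_angle_mono[OF E, of "\<psi> j" "\<phi> j + pi"] Suc \<phi>' \<psi> by (simp add: chord_lift_def)
  ultimately show ?case ..
qed

text \<open>\<open>bform E x y = 1\<close> says that \<open>y\<close> lies on the polar line of \<open>x\<close> with respect to \<open>E\<close>;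
  a chord chain is thus a counterclockwise Poncelet chain on the unit circle.\<close>
definition chord_chain :: "ellipse \<Rightarrow> (nat \<Rightarrow> pt) \<Rightarrow> bool" where
  "chord_chain E v \<longleftrightarrow> (\<forall>j. norm (v j) = 1 \<and> bform E (v j) (v (Suc j)) = 1
     \<and> 0 < det2 (v j) (v (Suc j)))"

lemma chord_chain_lift:
  assumes "chord_chain E v"
  obtains \<phi> where "chord_lift E \<phi>" "\<And>j. unit_vec (\<phi> j) = v j"
proof -
  have "\<exists>\<phi>. \<forall>j. unit_vec (\<phi> j) = v j \<and> \<phi> j < \<phi> (Suc j) \<and> \<phi> (Suc j) < \<phi> j + pi"
  proof (rule dependent_nat_choice)
    show "\<exists>a. unit_vec a = v 0"
      using assms unit_vec_surj by (metis chord_chain_def)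
    show "\<exists>b. unit_vec b = v (Suc j) \<and> a < b \<and> b < a + pi" if "unit_vec a = v j" for a j
      using that assms unit_vec_lift_ccw[of "v (Suc j)" a] by (metis chord_chain_def)
  qed
  then show ?thesis using that assms by (auto simp: chord_chain_def chord_lift_def)
qed

lemma chord_chain_half_period:
  assumes E: "inside_unit_circle E" and v: "chord_chain E v" and per: "v (2 * n) = v 0"
  shows "v n = v 0 \<or> v n = - v 0"
proof (rule ccontr)
  txt \<open>Otherwise a lift \<open>\<phi>\<close> shifted by some \<open>k pi\<close> interlaces with \<open>\<phi> (\<cdot> + n)\<close> at \<open>0\<close>,
    hence everywhere; at \<open>n\<close> this traps the winding \<open>2 m\<close> of \<open>\<phi>\<close> strictly between
    \<open>2 k\<close> and \<open>2 k + 2\<close>.\<close>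
  assume not_pm: "\<not> (v n = v 0 \<or> v n = - v 0)"
  obtain \<phi> where \<phi>: "chord_lift E \<phi>" and v\<phi>: "\<And>j. unit_vec (\<phi> j) = v j"
    using chord_chain_lift[OF v] by blast
  have "unit_vec (\<phi> (2 * n)) = unit_vec (\<phi> 0)" using per by (simp add: v\<phi>)
  then have "sin (\<phi> (2 * n)) = sin (\<phi> 0) \<and> cos (\<phi> (2 * n)) = cos (\<phi> 0)"
    by (simp add: unit_vec_def)
  then obtain m :: int where m: "\<phi> (2 * n) = \<phi> 0 + 2 * pi * of_int m"
    using sin_cos_eq_iff by blast
  define k where "k = \<lfloor>(\<phi> n - \<phi> 0) / pi\<rfloor>"
  have "of_int k \<le> (\<phi> n - \<phi> 0) / pi" "(\<phi> n - \<phi> 0) / pi < of_int k + 1"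
    unfolding k_def by linarith+
  moreover have "(of_int k + 1) * pi = of_int k * pi + pi" by (simp add: distrib_right)
  ultimately have k: "of_int k * pi \<le> \<phi> n - \<phi> 0" "\<phi> n - \<phi> 0 < of_int k * pi + pi"
    by (simp_all add: pos_le_divide_eq pos_divide_less_eq)
  have "\<phi> n \<noteq> \<phi> 0 + of_int k * pi"
  proof
    assume "\<phi> n = \<phi> 0 + of_int k * pi"
    then have "v n = (if even k then v 0 else - v 0)"
      by (metis v\<phi> unit_vec_add_pi_int)
    with not_pm show False by presburger
  qed
  with k have start: "\<phi> 0 + of_int k * pi < \<phi> n" "\<phi> n < \<phi> 0 + of_int k * pi + pi"
    by linarith+
  have "\<phi> n + of_int k * pi < \<phi> (n + n) \<and> \<phi> (n + n) < \<phi> n + of_int k * pi + pi"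
    by (rule chord_lift_interlace[OF E chord_lift_add_pi_int[OF \<phi>, of k] chord_lift_shift[OF \<phi>, of n]])
      (use start in simp_all)
  moreover have "\<phi> (n + n) = \<phi> 0 + 2 * (of_int m * pi)"
    using m by (simp only: mult_2[symmetric] ac_simps)
  ultimately have "of_int k * pi < of_int m * pi" "of_int m * pi < (of_int k + 1) * pi"
    using k unfolding distrib_right by (smt (verit))+
  then have "k < m" "m < k + 1" by (simp_all add: mult_less_cancel_right)
  then show False by linarith
qed

lemma chord_successor_unique:
  assumes E: "inside_unit_circle E" and "norm x = 1" "norm y1 = 1" "norm y2 = 1"
    and "0 < det2 x y1" "0 < det2 x y2" "bform E x y1 = 1" "bform E x y2 = 1"
  shows "y1 = y2"
proof -
  obtain a where a: "unit_vec a = x" using unit_vec_surj \<open>norm x = 1\<close> by blast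
  obtain a1 where a1: "a < a1" "a1 < a + pi" "unit_vec a1 = y1"
    using unit_vec_lift_ccw[of y1 a] assms a by blast
  obtain a2 where a2: "a < a2" "a2 < a + pi" "unit_vec a2 = y2"
    using unit_vec_lift_ccw[of y2 a] assms a by blast
  have "a1 = a2" using chord_angle_unique[OF E a1(1,2) a2(1,2)] assms a a1 a2 by simp
  then show ?thesis using a1 a2 by simp
qed

lemma chord_chain_unique:
  assumes E: "inside_unit_circle E" and v: "chord_chain E v" and w: "chord_chain E w"
    and "v 0 = w 0"
  shows "v j = w j"
proof (induction j)
  case 0
  show ?case using assms by simp
next
  case (Suc j)
  have "norm (v (Suc j)) = 1" "0 < det2 (w j) (v (Suc j))" "bform E (w j) (v (Suc j)) = 1"
    using v Suc.IH unfolding chord_chain_def by metis+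
  then show ?case using w chord_successor_unique[OF E, of "w j"] unfolding chord_chain_def by metis
qed

lemma chord_chain_uminus: "chord_chain E v \<Longrightarrow> chord_chain E (\<lambda>j. - v j)"
  by (simp add: chord_chain_def det2_def)

lemma chord_chain_shift: "chord_chain E v \<Longrightarrow> chord_chain E (\<lambda>j. v (j + n))"
  by (simp add: chord_chain_def)

lemma chord_chain_half_turn:
  assumes E: "inside_unit_circle E" and v: "chord_chain E v" and "v (2 * n) = v 0"
  shows "(\<forall>j. v (j + n) = v j) \<or> (\<forall>j. v (j + n) = - v j)"
  using chord_chain_half_period[OF assms]
    chord_chain_unique[OF E chord_chain_shift[OF v] v]
    chord_chain_unique[OF E chord_chain_shift[OF v] chord_chain_uminus[OF v]]
  by auto

lemma sum_lessThan_shift_periodic: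
  fixes g :: "nat \<Rightarrow> 'a :: ab_group_add"
  assumes "\<And>i. g (i + n) = g i"
  shows "(\<Sum>i<n. g (i + k)) = (\<Sum>i<n. g i)"
proof (induction k)
  case (Suc k)
  have "(\<Sum>i<n. g (i + Suc k)) = (\<Sum>i<n. g (Suc i + k))" by simp
  also have "\<dots> = (\<Sum>i<n. g (i + k)) + g (n + k) - g k"
    using sum.lessThan_Suc_shift[of "\<lambda>i. g (i + k)" n] sum.lessThan_Suc[of "\<lambda>i. g (i + k)" n]
    by (simp add: algebra_simps)
  also have "g (n + k) = g k" using assms[of k] by (simp add: add.commute)
  finally show ?case using Suc.IH by simp
qed simp

text \<open>Since \<open>n\<close> is odd, the half turn \<open>j \<mapsto> j + n\<close> exchanges the odd and the even
  vertices of the \<open>2 n\<close>-gon and preserves areas, as it is \<open>\<plusminus>\<close> the identity.\<close>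
lemma chord_chain_odd_even_area:
  assumes E: "inside_unit_circle E" and v: "chord_chain E v"
    and per: "\<And>j. v (j + 2 * n) = v j" and "odd n"
  shows "(\<Sum>i<n. det2 (v (2 * i + 1)) (v (2 * i + 3))) = (\<Sum>i<n. det2 (v (2 * i)) (v (2 * i + 2)))"
proof -
  define h where "h j = det2 (v j) (v (j + 2))" for j
  have h_shift: "h (j + n) = h j" for j
  proof -
    have "(v (j + n) = v j \<and> v (j + 2 + n) = v (j + 2))
        \<or> (v (j + n) = - v j \<and> v (j + 2 + n) = - v (j + 2))"
      using chord_chain_half_turn[OF E v per[of 0, simplified]] by blast
    then have "det2 (v (j + n)) (v (j + 2 + n)) = det2 (v j) (v (j + 2))"
      by (auto simp: det2_def)
    then show ?thesis by (simp add: h_def ac_simps)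
  qed
  have h_per: "h (2 * (i + n)) = h (2 * i)" for i
    using per[of "2 * i"] per[of "2 * i + 2"] by (simp add: h_def algebra_simps)
  obtain b where b: "n = 2 * b + 1" using \<open>odd n\<close> by (rule oddE)
  have "(\<Sum>i<n. det2 (v (2 * i + 1)) (v (2 * i + 3))) = (\<Sum>i<n. h (2 * i + 1))"
    by (simp add: h_def numeral_3_eq_3)
  also have "\<dots> = (\<Sum>i<n. h (2 * i + 1 + n))" by (simp only: h_shift)
  also have "\<dots> = (\<Sum>i<n. h (2 * (i + (b + 1))))"
    by (simp add: b algebra_simps)
  also have "\<dots> = (\<Sum>i<n. h (2 * i))"
    using sum_lessThan_shift_periodic[of "\<lambda>i. h (2 * i)" n "b + 1"] h_per by simp
  finally show ?thesis by (simp add: h_def)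
qed

section \<open>Poncelet chains on an ellipse\<close>

text \<open>A Cholesky factorisation of the form of \<open>C\<close>: \<open>to_circle C s\<close> maps the ellipse
  \<open>bform C x x = 1\<close> onto the unit circle, preserving orientation for \<open>s = 1\<close> and
  reversing it for \<open>s = -1\<close>.\<close>
definition to_circle :: "ellipse \<Rightarrow> real \<Rightarrow> pt \<Rightarrow> pt" where
  "to_circle C s x = (sqrt (ca C) * fst x + cb C / sqrt (ca C) * snd x,
     s * sqrt (detE C / ca C) * snd x)"

definition from_circle :: "ellipse \<Rightarrow> real \<Rightarrow> pt \<Rightarrow> pt" where
  "from_circle C s z =
     ((fst z - cb C / sqrt (ca C) * (snd z / (s * sqrt (detE C / ca C)))) / sqrt (ca C),
      snd z / (s * sqrt (detE C / ca C)))"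

lemma
  assumes "is_ellipse C" "s \<noteq> 0"
  shows to_circle_from_circle: "to_circle C s (from_circle C s z) = z"
    and from_circle_to_circle: "from_circle C s (to_circle C s x) = x"
proof -
  have "0 < ca C" "0 < detE C / ca C" using assms(1) detE_pos by (auto simp: is_ellipse_def)
  then show "to_circle C s (from_circle C s z) = z" "from_circle C s (to_circle C s x) = x"
    using assms(2) by (simp_all add: to_circle_def from_circle_def prod_eq_iff field_simps)
qed

lemma linear_from_circle: "linear (from_circle C s)"
  by (rule linearI) (simp_all add: from_circle_def algebra_simps diff_divide_distrib add_divide_distrib)

lemma norm_to_circle:
  assumes "is_ellipse C" "s\<^sup>2 = 1"
  shows "(norm (to_circle C s x))\<^sup>2 = bform C x x"
proof -
  have a: "0 < ca C" and d: "0 < detE C" using assms(1) detE_pos by (auto simp: is_ellipse_def)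
  have "(norm (to_circle C s x))\<^sup>2 = (fst (to_circle C s x))\<^sup>2 + (snd (to_circle C s x))\<^sup>2"
    by (simp add: norm_prod_def)
  also have "\<dots>
      = ca C * (fst x)\<^sup>2 + 2 * cb C * fst x * snd x + ((cb C)\<^sup>2 + detE C) / ca C * (snd x)\<^sup>2"
    using a d assms(2)
    by (simp add: to_circle_def power2_sum power_mult_distrib power_divide field_simps)
      (simp add: power2_eq_square)
  also have "((cb C)\<^sup>2 + detE C) / ca C = cd C" using a by (simp add: detE_def field_simps)
  finally show ?thesis by (simp add: bform_def power2_eq_square algebra_simps)
qed

lemma det2_to_circle:
  assumes "is_ellipse C"
  shows "det2 (to_circle C s a) (to_circle C s b) = s * sqrt (detE C) * det2 a b"
proof -
  have "0 < ca C" using assms by (simp add: is_ellipse_def)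
  then have "sqrt (ca C) * sqrt (detE C / ca C) = sqrt (detE C)"
    by (simp flip: real_sqrt_mult)
  then show ?thesis
    by (simp add: to_circle_def det2_def algebra_simps)
qed

lemma inside_unit_circle_pullback_from_circle:
  assumes C: "is_ellipse C" and s: "s\<^sup>2 = 1" and K: "\<And>x. x \<noteq> 0 \<Longrightarrow> bform C x x < bform K x x"
  shows "inside_unit_circle (pullback_form K (from_circle C s))"
  unfolding inside_unit_circle_def
proof (intro allI impI)
  fix x :: pt
  assume "norm x = 1"
  moreover have "s \<noteq> 0" using s by auto
  ultimately have on_C: "bform C (from_circle C s x) (from_circle C s x) = 1"
    using norm_to_circle[OF C s, of "from_circle C s x"] by (simp add: to_circle_from_circle[OF C])
  then have "1 < bform K (from_circle C s x) (from_circle C s x)"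
    using K[OF bform_eq_1_imp_nonzero[OF on_C]] by simp
  then show "1 < bform (pullback_form K (from_circle C s)) x x"
    by (simp add: bform_pullback_form[OF linear_from_circle])
qed

lemma poncelet_chain_odd_even_area:
  assumes C: "is_ellipse C" and K: "\<And>x. x \<noteq> 0 \<Longrightarrow> bform C x x < bform K x x"
    and s: "s\<^sup>2 = 1"
    and on_C: "\<And>j. bform C (y j) (y j) = 1"
    and polar: "\<And>j. bform K (y j) (y (Suc j)) = 1"
    and orient: "\<And>j. 0 < s * det2 (y j) (y (Suc j))"
    and per: "\<And>j. y (j + 2 * n) = y j" and "odd n"
  shows "(\<Sum>i<n. det2 (y (2 * i + 1)) (y (2 * i + 3))) = (\<Sum>i<n. det2 (y (2 * i)) (y (2 * i + 2)))"
proof -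
  define v where "v j = to_circle C s (y j)" for j
  have s0: "s \<noteq> 0" using s by auto
  have det2_v: "det2 (v j) (v k) = s * sqrt (detE C) * det2 (y j) (y k)" for j k
    by (simp add: v_def det2_to_circle[OF C])
  have "chord_chain (pullback_form K (from_circle C s)) v"
    unfolding chord_chain_def
  proof (intro allI conjI)
    fix j
    have "(norm (v j))\<^sup>2 = 1" using norm_to_circle[OF C s] on_C by (simp add: v_def)
    then show "norm (v j) = 1" using norm_ge_zero[of "v j"] by (auto simp: power2_eq_1_iff)
    show "bform (pullback_form K (from_circle C s)) (v j) (v (Suc j)) = 1"
      using polar
      by (simp add: bform_pullback_form[OF linear_from_circle] v_def from_circle_to_circle[OF C s0])
    have "0 < sqrt (detE C) * (s * det2 (y j) (y (Suc j)))"
      using orient detE_pos[OF C] by simp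
    then show "0 < det2 (v j) (v (Suc j))" by (simp add: det2_v ac_simps)
  qed
  moreover have "v (j + 2 * n) = v j" for j using per by (simp add: v_def)
  ultimately have "(\<Sum>i<n. det2 (v (2 * i + 1)) (v (2 * i + 3)))
      = (\<Sum>i<n. det2 (v (2 * i)) (v (2 * i + 2)))"
    using chord_chain_odd_even_area[OF inside_unit_circle_pullback_from_circle[OF C s K]] \<open>odd n\<close>
    by blast
  then show ?thesis
    using s0 detE_pos[OF C] by (simp add: det2_v flip: sum_distrib_left)
qed

section \<open>The geometric mean of two forms\<close>

definition rel_trace :: "ellipse \<Rightarrow> ellipse \<Rightarrow> real" where
  "rel_trace C D = (cd C * ca D - 2 * cb C * cb D + ca C * cd D) / detE C"

lemma form_mat_cayley_hamilton:
  assumes "detE C \<noteq> 0"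
  shows "form_mat D (form_mat_inv C (form_mat D x))
       = rel_trace C D *\<^sub>R form_mat D x - (detE D / detE C) *\<^sub>R form_mat C x"
proof -
  have "form_mat D (form_adj C (form_mat D x))
      = (cd C * ca D - 2 * cb C * cb D + ca C * cd D) *\<^sub>R form_mat D x - detE D *\<^sub>R form_mat C x"
    by (simp add: form_mat_def form_adj_def detE_def prod_eq_iff power2_eq_square algebra_simps)
  then show ?thesis using assms
    by (simp add: form_mat_inv_def form_mat_scaleR rel_trace_def scaleR_diff_right divide_inverse
        mult.commute [of _ "inverse (detE C)"])
qed

lemma rel_trace_pos:
  assumes C: "is_ellipse C" and D: "is_ellipse D"
  shows "0 < rel_trace C D"
proof -
  define N where "N = cd C * ca D - 2 * cb C * cb D + ca C * cd D"
  have "ca C * ca D * N = (ca D)\<^sup>2 * detE C + (ca C * cb D - cb C * ca D)\<^sup>2 + (ca C)\<^sup>2 * detE D"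
    unfolding N_def detE_def by algebra
  moreover have "0 < (ca D)\<^sup>2 * detE C" "0 < (ca C)\<^sup>2 * detE D" "0 < ca C * ca D"
    using C D detE_pos[OF C] detE_pos[OF D] by (simp_all add: is_ellipse_def)
  ultimately have "0 < ca C * ca D * N"
    by (metis add_pos_nonneg add_pos_pos zero_le_power2)
  then have "0 < N" using \<open>0 < ca C * ca D\<close> by (rule zero_less_mult_pos)
  then show ?thesis using detE_pos[OF C] by (simp add: rel_trace_def N_def)
qed

definition sqrt_det_ratio :: "ellipse \<Rightarrow> ellipse \<Rightarrow> real" where
  "sqrt_det_ratio C D = sqrt (detE D / detE C)"

definition geomean_scale :: "ellipse \<Rightarrow> ellipse \<Rightarrow> real" where
  "geomean_scale C D = sqrt (2 * sqrt_det_ratio C D + rel_trace C D)"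

text \<open>The geometric mean \<open>K\<close> of the forms \<open>C\<close> and \<open>D\<close>, characterised by \<open>K C\<inverse> K = D\<close>.
  For \<open>\<mu>\<^sup>2 = det D / det C\<close>, Cayley-Hamilton for \<open>C\<inverse> D\<close> gives
  \<open>(\<mu> C + D) C\<inverse> (\<mu> C + D) = (2 \<mu> + tr (C\<inverse> D)) D\<close>, so \<open>K\<close> is \<open>\<mu> C + D\<close> normalised.\<close>
definition geomean_form :: "ellipse \<Rightarrow> ellipse \<Rightarrow> ellipse" where
  "geomean_form C D = \<lparr>ctr = ctr C,
     ca = (sqrt_det_ratio C D * ca C + ca D) / geomean_scale C D,
     cb = (sqrt_det_ratio C D * cb C + cb D) / geomean_scale C D,
     cd = (sqrt_det_ratio C D * cd C + cd D) / geomean_scale C D\<rparr>"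

lemma geomean_constants:
  assumes "is_ellipse C" "is_ellipse D"
  shows "0 < sqrt_det_ratio C D" "0 < geomean_scale C D"
    and "(sqrt_det_ratio C D)\<^sup>2 = detE D / detE C"
    and "(geomean_scale C D)\<^sup>2 = 2 * sqrt_det_ratio C D + rel_trace C D"
proof -
  have "0 < detE C" "0 < detE D" using assms detE_pos by auto
  then show "0 < sqrt_det_ratio C D" "(sqrt_det_ratio C D)\<^sup>2 = detE D / detE C"
    by (simp_all add: sqrt_det_ratio_def)
  then have "0 < 2 * sqrt_det_ratio C D + rel_trace C D"
    using rel_trace_pos[OF assms] by simp
  then show "0 < geomean_scale C D" "(geomean_scale C D)\<^sup>2 = 2 * sqrt_det_ratio C D + rel_trace C D"
    by (simp_all add: geomean_scale_def)
qed

lemma bform_geomean_form: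
  "bform (geomean_form C D) x y = (sqrt_det_ratio C D * bform C x y + bform D x y) / geomean_scale C D"
  by (simp add: bform_def geomean_form_def add_divide_distrib algebra_simps)

lemma form_mat_geomean_form:
  "form_mat (geomean_form C D) x
     = (1 / geomean_scale C D) *\<^sub>R (sqrt_det_ratio C D *\<^sub>R form_mat C x + form_mat D x)"
  by (simp add: form_mat_def geomean_form_def prod_eq_iff add_divide_distrib algebra_simps)

lemma form_mat_geomean_sandwich:
  assumes C: "is_ellipse C" and D: "is_ellipse D"
  defines "K \<equiv> geomean_form C D"
  shows "form_mat K (form_mat_inv C (form_mat K x)) = form_mat D x"
proof -
  define \<mu> \<nu> where "\<mu> = sqrt_det_ratio C D" and "\<nu> = geomean_scale C D"
  note c = geomean_constants[OF C D, folded \<mu>_def \<nu>_def]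
  have dC: "detE C \<noteq> 0" using detE_pos[OF C] by simp
  define w where "w = form_mat_inv C (form_mat D x)"
  have Cw: "form_mat C w = form_mat D x" by (simp add: w_def form_mat_cancel[OF dC])
  have Dw: "form_mat D w = rel_trace C D *\<^sub>R form_mat D x - \<mu>\<^sup>2 *\<^sub>R form_mat C x"
    by (simp add: w_def form_mat_cayley_hamilton[OF dC] c(3))
  have y: "form_mat_inv C (form_mat K x) = (1 / \<nu>) *\<^sub>R (\<mu> *\<^sub>R x + w)"
    by (simp add: K_def form_mat_geomean_form form_mat_inv_add form_mat_inv_scaleR
        form_mat_inv_cancel[OF dC] w_def flip: \<mu>_def \<nu>_def)
  have inner: "\<mu> *\<^sub>R (\<mu> *\<^sub>R form_mat C x + form_mat D x) + (\<mu> *\<^sub>R form_mat C w + form_mat D w)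
      = (2 * \<mu> + rel_trace C D) *\<^sub>R form_mat D x"
    unfolding Cw Dw by (simp add: algebra_simps power2_eq_square) (simp add: scaleR_add_left [symmetric])
  have "form_mat K (form_mat_inv C (form_mat K x))
      = (1 / \<nu>) *\<^sub>R (\<mu> *\<^sub>R ((1 / \<nu>) *\<^sub>R (\<mu> *\<^sub>R form_mat C x + form_mat D x))
          + (1 / \<nu>) *\<^sub>R (\<mu> *\<^sub>R form_mat C w + form_mat D w))"
    unfolding y unfolding K_def form_mat_geomean_form form_mat_add form_mat_scaleR
      \<mu>_def [symmetric] \<nu>_def [symmetric] ..
  also have "\<dots> = (1 / \<nu>\<^sup>2) *\<^sub>R
      (\<mu> *\<^sub>R (\<mu> *\<^sub>R form_mat C x + form_mat D x) + (\<mu> *\<^sub>R form_mat C w + form_mat D w))"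
    unfolding scaleR_add_right scaleR_scaleR by (simp add: power2_eq_square)
  also have "\<dots> = (1 / \<nu>\<^sup>2) *\<^sub>R ((2 * \<mu> + rel_trace C D) *\<^sub>R form_mat D x)"
    by (simp only: inner)
  also have "\<dots> = form_mat D x"
    using c(2) by (simp add: c(4) [symmetric])
  finally show ?thesis .
qed

definition form_diff :: "ellipse \<Rightarrow> ellipse \<Rightarrow> ellipse" where
  "form_diff D C = \<lparr>ctr = 0, ca = ca D - ca C, cb = cb D - cb C, cd = cd D - cd C\<rparr>"

lemma bform_form_diff: "bform (form_diff D C) x y = bform D x y - bform C x y"
  by (simp add: form_diff_def bform_def algebra_simps)

lemma detE_form_diff:
  "detE (form_diff D C) = detE D - (cd C * ca D - 2 * cb C * cb D + ca C * cd D) + detE C"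
  by (simp add: form_diff_def detE_def power2_eq_square algebra_simps)

lemma geomean_form_greater:
  assumes C: "is_ellipse C" and D: "is_ellipse D"
    and DC: "\<And>y. y \<noteq> 0 \<Longrightarrow> bform C y y < bform D y y" and "x \<noteq> 0"
  shows "bform C x x < bform (geomean_form C D) x x"
proof -
  define \<mu> \<nu> where "\<mu> = sqrt_det_ratio C D" and "\<nu> = geomean_scale C D"
  note c = geomean_constants[OF C D, folded \<mu>_def \<nu>_def]
  define m n where "m = bform C x x" and "n = bform D x x"
  have m: "0 < m" and mn: "m < n" using bform_pos[OF C \<open>x \<noteq> 0\<close>] DC[OF \<open>x \<noteq> 0\<close>]
    by (simp_all add: m_def n_def)
  have "is_ellipse (form_diff D C)"
    using DC by (intro is_ellipseI_pos_def) (simp add: bform_form_diff)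
  then have "0 < detE (form_diff D C) / detE C" using detE_pos[OF C] detE_pos by simp
  also have "detE (form_diff D C) / detE C = \<mu>\<^sup>2 - rel_trace C D + 1"
    using detE_pos[OF C]
    by (simp add: c(3) detE_form_diff rel_trace_def add_divide_distrib diff_divide_distrib)
  finally have gap: "0 < \<mu>\<^sup>2 - rel_trace C D + 1" .
  have "(\<nu> * m)\<^sup>2 < (\<mu> * m + n)\<^sup>2"
  proof -
    have "(\<mu> * m + n)\<^sup>2 - (\<nu> * m)\<^sup>2
        = (\<mu>\<^sup>2 - rel_trace C D + 1) * m\<^sup>2 + (n\<^sup>2 - m\<^sup>2) + 2 * \<mu> * m * (n - m)"
      by (simp add: power_mult_distrib c(4)) (simp add: power2_eq_square algebra_simps)
    moreover have "0 < (\<mu>\<^sup>2 - rel_trace C D + 1) * m\<^sup>2" using gap m by simp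
    moreover have "0 < n\<^sup>2 - m\<^sup>2" using m mn by (simp add: power_strict_mono)
    moreover have "0 < 2 * \<mu> * m * (n - m)" using c(1) m mn by simp
    ultimately show ?thesis by linarith
  qed
  moreover have "0 \<le> \<mu> * m + n" using c(1) m mn by (simp add: add_nonneg_nonneg)
  ultimately have "\<nu> * m < \<mu> * m + n" by (rule power2_less_imp_less)
  then have "m < (\<mu> * m + n) / \<nu>" using c(2) by (simp add: pos_less_divide_eq mult.commute)
  then show ?thesis
    unfolding bform_geomean_form \<mu>_def [symmetric] \<nu>_def [symmetric] m_def [symmetric]
      n_def [symmetric] .
qed

lemma geomean_polar_point:
  fixes t :: pt
  assumes C: "is_ellipse C" and D: "is_ellipse D"
  defines "K \<equiv> geomean_form C D"
  defines "r \<equiv> form_mat_inv C (form_mat K t)"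
  shows "bform K r x = bform D t x" and "bform D t t = 1 \<Longrightarrow> bform C r r = 1"
proof -
  have dC: "detE C \<noteq> 0" using detE_pos[OF C] by simp
  have "form_mat K r = form_mat D t" by (simp add: r_def K_def form_mat_geomean_sandwich[OF C D])
  then have rK: "bform K r y = bform D t y" for y
    using bform_eq_if_form_mat_eq[of K r D t y] bform_commute[of K r y] bform_commute[of D t y]
    by simp
  then show "bform K r x = bform D t x" .
  show "bform C r r = 1" if "bform D t t = 1"
    using bform_form_mat_inv[OF dC, of r K t] that by (simp add: r_def [symmetric] rK)
qed

section \<open>Tangent lines and poles\<close>

text \<open>The signed distance to the line, restricted to the ellipse, has a minimum at the contact
  point, so its derivative along the ellipse vanishes there.\<close>
lemma supporting_line_tangent:
  assumes D: "is_ellipse D" and "s \<noteq> 0" and t: "bform D t t = 1" and col: "det2 d (t - u) = 0"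
    and side: "\<And>w. bform D w w = 1 \<Longrightarrow> 0 \<le> s * det2 d (w - u)"
  shows "bform D t d = 0"
proof -
  define r where "r = sqrt (detE D)"
  have r: "0 < r" using detE_pos[OF D] by (simp add: r_def)
  define v0 where "v0 = (- (cb D * fst t + cd D * snd t), ca D * fst t + cb D * snd t)"
  define v where "v = (1 / r) *\<^sub>R v0"
  have "bform D t v0 = 0" by (simp add: v0_def bform_def algebra_simps)
  then have tv: "bform D t v = 0" by (simp add: v_def bform_scaleR_right)
  have "bform D v0 v0 = detE D * bform D t t"
    by (simp add: v0_def bform_def detE_def power2_eq_square algebra_simps)
  then have vv: "bform D v v = 1"
    using t r detE_pos[OF D] by (simp add: v_def bform_scaleR_left bform_scaleR_right r_def)
  have "det2 d v0 = bform D t d" by (simp add: v0_def bform_def det2_def algebra_simps)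
  then have dv: "det2 d v = bform D t d / r" by (simp add: v_def det2_scaleR_right)
  define g where "g \<theta> = s * (cos \<theta> * det2 d t + sin \<theta> * det2 d v - det2 d u)" for \<theta>
  have "0 \<le> g \<theta>" for \<theta>
  proof -
    define w where "w = cos \<theta> *\<^sub>R t + sin \<theta> *\<^sub>R v"
    have "bform D w w = (cos \<theta>)\<^sup>2 * bform D t t + 2 * cos \<theta> * sin \<theta> * bform D t v
        + (sin \<theta>)\<^sup>2 * bform D v v"
      by (simp add: w_def bform_add_scaleR_left bform_add_scaleR_right bform_commute[of D v t]
          power2_eq_square algebra_simps)
    then have "bform D w w = 1" by (simp add: t tv vv)
    then have "0 \<le> s * det2 d (w - u)" by (rule side)
    then show ?thesis by (simp add: g_def w_def det2_def algebra_simps)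
  qed
  moreover have "g 0 = 0" using col by (simp add: g_def det2_def algebra_simps)
  moreover have "(g has_real_derivative s * det2 d v) (at 0)"
    unfolding g_def by (auto intro!: derivative_eq_intros)
  ultimately have "s * det2 d v = 0" by (intro DERIV_local_min[of g _ 0 1]) auto
  then show ?thesis using \<open>s \<noteq> 0\<close> r by (simp add: dv)
qed

lemma tangent_side_contact:
  assumes D: "is_ellipse D" and "s \<noteq> 0" and "u \<noteq> u'"
    and t: "bform D t t = 1" and col: "det2 (u' - u) (t - u) = 0"
    and side: "\<And>w. bform D w w = 1 \<Longrightarrow> 0 \<le> s * det2 (u' - u) (w - u)"
  shows "bform D t u = 1" "bform D t u' = 1" "0 < s * det2 u u'"
proof -
  define d where "d = u' - u"
  have "d \<noteq> 0" using \<open>u \<noteq> u'\<close> by (simp add: d_def)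
  have td: "bform D t d = 0"
    using supporting_line_tangent[OF D \<open>s \<noteq> 0\<close> t] col side by (simp add: d_def)
  obtain c where "t - u = c *\<^sub>R d" using det2_eq_0_imp_scaleR[OF _ \<open>d \<noteq> 0\<close>] col d_def by metis
  then have "bform D t (t - u) = 0" using td by (simp add: bform_scaleR_right)
  then show tu: "bform D t u = 1" using t by (simp add: bform_def algebra_simps)
  show "bform D t u' = 1"
    using tu td by (simp add: d_def bform_def algebra_simps)
  have "0 \<le> s * det2 d (- t - u)" using side[of "- t"] t by (simp add: d_def)
  moreover have "det2 d (- t - u) = 2 * det2 u u'"
    using col by (simp add: d_def det2_def algebra_simps)
  ultimately have "0 \<le> s * det2 u u'" by (simp add: zero_le_mult_iff)
  moreover have "det2 u u' \<noteq> 0"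
  proof
    assume "det2 u u' = 0"
    then have "det2 d t = 0" using col by (simp add: d_def det2_def algebra_simps)
    then obtain c' where "t = c' *\<^sub>R d" using det2_eq_0_imp_scaleR[OF _ \<open>d \<noteq> 0\<close>] by metis
    then have "bform D t t = 0" using td by (simp add: bform_scaleR_right bform_commute)
    then show False using t by simp
  qed
  ultimately show "0 < s * det2 u u'" using \<open>s \<noteq> 0\<close> by (simp add: less_le)
qed

lemma ellipse_inside_imp_form_less:
  assumes "concentric C D" and ins: "ellipse_inside D C" and D: "is_ellipse D" and "x \<noteq> 0"
  shows "bform C x x < bform D x x"
proof -
  define \<sigma> where "\<sigma> = 1 / sqrt (bform D x x)"
  have "0 < bform D x x" using bform_pos[OF D \<open>x \<noteq> 0\<close>] .
  then have \<sigma>: "\<sigma>\<^sup>2 * bform D x x = 1" by (simp add: \<sigma>_def power_divide)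
  have "ctr D + \<sigma> *\<^sub>R x \<in> curve D"
    using \<sigma> by (simp add: curve_def qform_def bform_scaleR_left bform_scaleR_right power2_eq_square)
  then have "qform C (ctr D + \<sigma> *\<^sub>R x) < 1" using ins by (simp add: ellipse_inside_def)
  then have "\<sigma>\<^sup>2 * bform C x x < \<sigma>\<^sup>2 * bform D x x"
    using \<sigma> \<open>concentric C D\<close>
    by (simp add: qform_def concentric_def bform_scaleR_left bform_scaleR_right power2_eq_square)
  then show ?thesis by (simp add: mult_less_cancel_left)
qed

lemma polar_pair_between:
  assumes C: "is_ellipse C" and KC: "\<And>x. x \<noteq> 0 \<Longrightarrow> bform C x x < bform K x x"
    and u: "bform C u u = 1" and u': "bform C u' u' = 1" and r: "bform C r r = 1"
    and uu': "0 < s * det2 u u'" and ru: "bform K r u = 1" and ru': "bform K r u' = 1"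
  shows "0 < s * det2 u r" "0 < s * det2 r u'"
proof -
  define \<delta> where "\<delta> = det2 u u'"
  have "\<delta> \<noteq> 0" using uu' by (auto simp: \<delta>_def)
  define a b where "a = det2 r u' / \<delta>" and "b = det2 u r / \<delta>"
  have cramer: "\<delta> *\<^sub>R r = det2 r u' *\<^sub>R u + det2 u r *\<^sub>R u'"
    by (simp add: \<delta>_def det2_def prod_eq_iff algebra_simps)
  have "r = (1 / \<delta>) *\<^sub>R (\<delta> *\<^sub>R r)" using \<open>\<delta> \<noteq> 0\<close> by simp
  also have "\<dots> = a *\<^sub>R u + b *\<^sub>R u'" unfolding cramer by (simp add: a_def b_def scaleR_add_right)
  finally have r_comb: "r = a *\<^sub>R u + b *\<^sub>R u'" .
  have "1 < bform K r r" using KC[OF bform_eq_1_imp_nonzero[OF r]] r by simp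
  also have "bform K r r = a + b"
    by (subst (2) r_comb) (simp add: bform_add_scaleR_right ru ru')
  finally have ab: "1 < a + b" .
  define c where "c = bform C u u'"
  have "1 - c\<^sup>2 = detE C * (det2 u u')\<^sup>2"
    using bform_cauchy_schwarz[of C u u'] u u' by (simp add: c_def)
  then have "c\<^sup>2 \<le> 1" using detE_pos[OF C] by (metis diff_ge_0_iff_ge zero_le_mult_iff zero_le_power2 less_le)
  then have c1: "c \<le> 1" by (simp add: abs_square_le_1)
  have "1 = a\<^sup>2 + 2 * a * b * c + b\<^sup>2"
    using r unfolding r_comb
    by (simp add: bform_add_scaleR_left bform_add_scaleR_right bform_commute[of C u' u] u u' c_def
        power2_eq_square algebra_simps)
  then have "0 < a \<and> 0 < b"
  proof (rule contrapos_pp)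
    assume "\<not> (0 < a \<and> 0 < b)"
    then have "a * b \<le> 0" using ab by (auto simp: mult_le_0_iff)
    then have "0 \<le> a * b * (c - 1)" using c1 by (simp add: mult_nonpos_nonpos)
    then have "(a + b)\<^sup>2 \<le> a\<^sup>2 + 2 * a * b * c + b\<^sup>2" by (simp add: power2_eq_square algebra_simps)
    moreover have "1 < (a + b)\<^sup>2" using ab by (simp add: one_less_power)
    ultimately show "1 \<noteq> a\<^sup>2 + 2 * a * b * c + b\<^sup>2" by linarith
  qed
  moreover have "s * det2 u r = b * (s * \<delta>)" "s * det2 r u' = a * (s * \<delta>)"
    using \<open>\<delta> \<noteq> 0\<close> by (simp_all add: a_def b_def)
  moreover have "0 < s * \<delta>" using uu' by (simp add: \<delta>_def)
  ultimately show "0 < s * det2 u r" "0 < s * det2 r u'" by (metis mult_pos_pos)+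
qed

text \<open>The tangents to \<open>C\<close> at two points of \<open>C\<close> meet at the pole of the chord, and the chord
  is the polar line \<open>bform D t z = 1\<close> of its contact point \<open>t\<close> with \<open>D\<close>.\<close>
lemma tangent_lines_meet:
  assumes C: "is_ellipse C" and "det2 u u' \<noteq> 0"
    and tu: "bform D t u = 1" and tu': "bform D t u' = 1"
  shows "(THE q. q \<in> tangent_line C (ctr C + u) \<and> q \<in> tangent_line C (ctr C + u'))
       = ctr C + form_mat_inv C (form_mat D t)"
proof (rule the_equality)
  have dC: "detE C \<noteq> 0" using detE_pos[OF C] by simp
  have pole: "bform C x (form_mat_inv C (form_mat D t)) = bform D t x" for x
    using bform_form_mat_inv[OF dC, of x D t] bform_commute[of D x t] by simp
  show "ctr C + form_mat_inv C (form_mat D t) \<in> tangent_line C (ctr C + u)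
      \<and> ctr C + form_mat_inv C (form_mat D t) \<in> tangent_line C (ctr C + u')"
    by (simp add: tangent_line_def pole tu tu')
  fix q
  assume "q \<in> tangent_line C (ctr C + u) \<and> q \<in> tangent_line C (ctr C + u')"
  then have "bform C u (q - ctr C) = 1" "bform C u' (q - ctr C) = 1"
    by (simp_all add: tangent_line_def)
  define z where "z = q - ctr C - form_mat_inv C (form_mat D t)"
  have "bform C u z = 0" "bform C u' z = 0"
    using \<open>bform C u (q - ctr C) = 1\<close> \<open>bform C u' (q - ctr C) = 1\<close>
    by (simp_all add: z_def bform_diff_right pole tu tu')
  then have "form_mat C z = 0"
    using orthogonal_to_basis_eq_0[OF \<open>det2 u u' \<noteq> 0\<close>, of "form_mat C z"]
    by (simp add: bform_form_mat)
  then have "z = 0"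
    using form_mat_inv_cancel[OF dC, of z] by (simp add: form_mat_inv_def form_adj_def zero_prod_def)
  then show "q = ctr C + form_mat_inv C (form_mat D t)" by (simp add: z_def algebra_simps)
qed

lemma tangential_polygon_pole:
  assumes C: "is_ellipse C"
    and "det2 (p (i mod n) - ctr C) (p (Suc i mod n) - ctr C) \<noteq> 0"
    and "bform D t (p (i mod n) - ctr C) = 1" "bform D t (p (Suc i mod n) - ctr C) = 1"
  shows "tangential_polygon C n p (i mod n) = ctr C + form_mat_inv C (form_mat D t)"
  using tangent_lines_meet[OF C assms(2-4)] by (simp add: tangential_polygon_def mod_Suc_eq)

section \<open>Areas of the polygons\<close>

lemma poly_area_centered:
  assumes "0 < n"
  shows "poly_area n p = (\<Sum>i<n. det2 (p (i mod n) - c) (p (Suc i mod n) - c)) / 2"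
proof -
  have "(\<Sum>i<n. det2 (p (i mod n) - c) (p (Suc i mod n) - c))
      = (\<Sum>i<n. det2 (p i) (p (Suc i mod n)) + det2 c (p (i mod n)) - det2 c (p (Suc i mod n)))"
    by (rule sum.cong) (simp_all add: det2_def algebra_simps)
  also have "\<dots> = (\<Sum>i<n. det2 (p i) (p (Suc i mod n)))"
    using sum_lessThan_shift_periodic[of "\<lambda>i. det2 c (p (i mod n))" n 1]
    by (simp add: sum.distrib sum_subtractf)
  finally show ?thesis by (simp add: poly_area_def)
qed

lemma poncelet_ngon_contact_points:
  assumes "0 < n" and D: "is_ellipse D" and "concentric C D" and P: "poncelet_ngon C D n s p"
  defines "u \<equiv> \<lambda>i. p (i mod n) - ctr C"
  obtains t where "\<And>i. t (i mod n) = t i" "\<And>i. bform D (t i) (t i) = 1"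
    "\<And>i. bform D (t i) (u i) = 1" "\<And>i. bform D (t i) (u (Suc i)) = 1"
    "\<And>i. 0 < s * det2 (u i) (u (Suc i))"
proof -
  have "s \<noteq> 0" using P by (auto simp: poncelet_ngon_def)
  have cD: "ctr D = ctr C" using \<open>concentric C D\<close> by (simp add: concentric_def)
  have "\<exists>z. z \<in> curve D \<and> det2 (p (Suc j mod n) - p j) (z - p j) = 0" if "j < n" for j
    using P that unfolding poncelet_ngon_def tangent_side_def by blast
  then obtain T where T: "\<And>j. j < n \<Longrightarrow> T j \<in> curve D \<and> det2 (p (Suc j mod n) - p j) (T j - p j) = 0"
    by metis
  define t where "t i = T (i mod n) - ctr C" for i
  have "bform D (t i) (t i) = 1 \<and> bform D (t i) (u i) = 1 \<and> bform D (t i) (u (Suc i)) = 1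
      \<and> 0 < s * det2 (u i) (u (Suc i))" for i
  proof -
    define j where "j = i mod n"
    have j: "j < n" using \<open>0 < n\<close> by (simp add: j_def)
    have ts: "tangent_side D s (p j) (p (Suc j mod n))" using P j by (simp add: poncelet_ngon_def)
    have u: "u i = p j - ctr C" "u (Suc i) = p (Suc j mod n) - ctr C"
      by (simp_all add: u_def j_def mod_Suc_eq)
    have t: "t i = T j - ctr C" by (simp add: t_def j_def)
    have tt: "bform D (t i) (t i) = 1" using T[OF j] by (simp add: t curve_def qform_def cD)
    have "u i \<noteq> u (Suc i)" using ts by (simp add: tangent_side_def u)
    moreover have "det2 (u (Suc i) - u i) (t i - u i) = 0" using T[OF j] by (simp add: t u)
    moreover have "0 \<le> s * det2 (u (Suc i) - u i) (w - u i)" if "bform D w w = 1" for w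
    proof -
      have "ctr C + w \<in> curve D" using that by (simp add: curve_def qform_def cD)
      then have "0 \<le> s * det2 (p (Suc j mod n) - p j) ((ctr C + w) - p j)"
        using ts by (simp add: tangent_side_def)
      moreover have "(ctr C + w) - p j = w - (p j - ctr C)" by (simp add: algebra_simps)
      ultimately show ?thesis by (simp add: u)
    qed
    ultimately show ?thesis using tangent_side_contact[OF D \<open>s \<noteq> 0\<close> _ tt] tt by blast
  qed
  moreover have "t (i mod n) = t i" for i by (simp add: t_def)
  ultimately show ?thesis using that by blast
qed

text \<open>The vertices \<open>u 0, r 0, u 1, r 1, \<dots>\<close> form a Poncelet \<open>2 n\<close>-gon.\<close>
lemma interleaved_poncelet_area:
  assumes C: "is_ellipse C" and KC: "\<And>x. x \<noteq> 0 \<Longrightarrow> bform C x x < bform K x x"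
    and s: "s\<^sup>2 = 1" and "odd n"
    and uC: "\<And>i. bform C (u i) (u i) = 1" and rC: "\<And>i. bform C (r i) (r i) = 1"
    and ru: "\<And>i. bform K (r i) (u i) = 1" and ru': "\<And>i. bform K (r i) (u (Suc i)) = 1"
    and orient: "\<And>i. 0 < s * det2 (u i) (u (Suc i))"
    and u_per: "\<And>i. u (i + n) = u i" and r_per: "\<And>i. r (i + n) = r i"
  shows "(\<Sum>i<n. det2 (r i) (r (Suc i))) = (\<Sum>i<n. det2 (u i) (u (Suc i)))"
proof -
  have between: "0 < s * det2 (u i) (r i) \<and> 0 < s * det2 (r i) (u (Suc i))" for i
    using polar_pair_between[OF C KC uC[of i] uC[of "Suc i"] rC[of i] orient[of i] ru[of i] ru'[of i]]
    by blast
  define y where "y j = (if even j then u (j div 2) else r (j div 2))" for j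
  have chain: "bform K (y j) (y (Suc j)) = 1 \<and> 0 < s * det2 (y j) (y (Suc j))" for j
  proof (cases "even j")
    case True
    then obtain k where "j = 2 * k" by (rule evenE)
    moreover have "bform K (u k) (r k) = 1" using ru bform_commute[of K "u k" "r k"] by simp
    ultimately show ?thesis by (simp add: y_def between)
  next
    case False
    then obtain k where "j = 2 * k + 1" by (rule oddE)
    then show ?thesis by (simp add: y_def ru' between)
  qed
  have "(\<Sum>i<n. det2 (y (2 * i + 1)) (y (2 * i + 3))) = (\<Sum>i<n. det2 (y (2 * i)) (y (2 * i + 2)))"
  proof (rule poncelet_chain_odd_even_area[OF C KC s _ _ _ _ \<open>odd n\<close>])
    show "bform C (y j) (y j) = 1" for j by (simp add: y_def uC rC)
    show "bform K (y j) (y (Suc j)) = 1" "0 < s * det2 (y j) (y (Suc j))" for j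
      using chain by simp_all
    show "y (j + 2 * n) = y j" for j
      using u_per[of "j div 2"] r_per[of "j div 2"] by (simp add: y_def add.commute)
  qed
  then show ?thesis by (simp add: y_def numeral_3_eq_3)
qed

lemma poncelet_tangential_area:
  assumes "odd n" and C: "is_ellipse C" and D: "is_ellipse D"
    and cc: "concentric C D" and "ellipse_inside D C" and P: "poncelet_ngon C D n s p"
  shows "poly_area n (tangential_polygon C n p) = detE (geomean_form C D) / detE C * poly_area n p"
    and "poly_area n p \<noteq> 0"
proof -
  have n: "0 < n" using \<open>odd n\<close> by (rule odd_pos)
  have s: "s\<^sup>2 = 1" using P by (auto simp: poncelet_ngon_def)
  define c where "c = ctr C"
  define u where "u i = p (i mod n) - c" for i
  obtain t where t_mod: "\<And>i. t (i mod n) = t i" and tt: "\<And>i. bform D (t i) (t i) = 1"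
    and tu: "\<And>i. bform D (t i) (u i) = 1" and tu': "\<And>i. bform D (t i) (u (Suc i)) = 1"
    and orient: "\<And>i. 0 < s * det2 (u i) (u (Suc i))"
    using poncelet_ngon_contact_points[OF n D cc P] by (auto simp: u_def c_def)
  have uC: "bform C (u i) (u i) = 1" for i
    using P n by (simp add: poncelet_ngon_def u_def c_def curve_def qform_def)
  define K where "K = geomean_form C D"
  have KC: "bform C x x < bform K x x" if "x \<noteq> 0" for x
    unfolding K_def using ellipse_inside_imp_form_less[OF cc \<open>ellipse_inside D C\<close> D]
    by (intro geomean_form_greater[OF C D _ that])
  define r where "r i = form_mat_inv C (form_mat K (t i))" for i
  have rK: "bform K (r i) x = bform D (t i) x" for i x
    unfolding r_def K_def by (rule geomean_polar_point[OF C D])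
  have area_r: "(\<Sum>i<n. det2 (r i) (r (Suc i))) = (\<Sum>i<n. det2 (u i) (u (Suc i)))"
  proof (rule interleaved_poncelet_area[where u = u and r = r, OF C KC s \<open>odd n\<close> uC _ _ _ orient])
    show "bform C (r i) (r i) = 1" for i
      unfolding r_def K_def by (rule geomean_polar_point(2)[OF C D tt])
    show "bform K (r i) (u i) = 1" "bform K (r i) (u (Suc i)) = 1" for i
      by (simp_all add: rK tu tu')
    show "u (i + n) = u i" for i by (simp add: u_def)
    show "r (i + n) = r i" for i by (metis r_def t_mod mod_add_self2)
  qed
  have area_p: "poly_area n p = (\<Sum>i<n. det2 (u i) (u (Suc i))) / 2"
    by (simp add: poly_area_centered[OF n, of p c] u_def)
  have Q: "tangential_polygon C n p (i mod n) - c = form_mat_inv C (form_mat K (r i))" for i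
  proof -
    have "det2 (u i) (u (Suc i)) \<noteq> 0" using orient[of i] by auto
    then show ?thesis
      using tangential_polygon_pole[OF C, where D = D and t = "t i"] tu[of i] tu'[of i]
      by (simp add: u_def c_def r_def K_def form_mat_geomean_sandwich[OF C D])
  qed
  have "poly_area n (tangential_polygon C n p) = (\<Sum>i<n. det2 (tangential_polygon C n p (i mod n) - c)
      (tangential_polygon C n p (Suc i mod n) - c)) / 2"
    by (rule poly_area_centered[OF n])
  also have "\<dots> = (\<Sum>i<n. det2 (form_mat_inv C (form_mat K (r i)))
      (form_mat_inv C (form_mat K (r (Suc i))))) / 2"
    by (simp only: Q)
  also have "\<dots> = detE K / detE C * (\<Sum>i<n. det2 (r i) (r (Suc i))) / 2"
    by (simp add: det2_form_mat_inv det2_form_mat sum_distrib_left)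
  also have "\<dots> = detE K / detE C * poly_area n p" by (simp add: area_r area_p)
  finally show "poly_area n (tangential_polygon C n p) = detE (geomean_form C D) / detE C * poly_area n p"
    by (simp add: K_def)
  have "0 < (\<Sum>i<n. s * det2 (u i) (u (Suc i)))" using n orient by (intro sum_pos) auto
  then show "poly_area n p \<noteq> 0" by (auto simp: area_p simp flip: sum_distrib_left)
qed

theorem theorem1p3:
  fixes C D :: ellipse and n :: nat and s :: real and p p' :: "nat \<Rightarrow> pt"
  assumes "odd n"
    and "is_ellipse C" and "is_ellipse D"
    and "concentric C D" and "ellipse_inside D C"
    and "poncelet_ngon C D n s p"
    and "poncelet_ngon C D n s p'"
  shows "poly_area n (tangential_polygon C n p) / poly_area n p
       = poly_area n (tangential_polygon C n p') / poly_area n p'"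
  using poncelet_tangential_area[OF assms(1-6)] poncelet_tangential_area[OF assms(1-5,7)] by simp

end
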